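(* Let $I$ be a nonempty set and $\mathbf{Lat}_I$ the category of $I$-complete lattices. Then $\mathbf{Lat}_I$ has 2-fold subobject decompositions over $I$: for any family $(L_i)_{i\in I}$ of $I$-complete lattices and any two $I$-complete sublattices $S,T$ of $\prod_{i\in I}L_i$, if for all $i,j\in I$ the images of $S$ and $T$ under the projection $\prod_{i\in I}L_i\to L_i\times L_j$ coincide, then $S=T$.
   Context: An $I$-complete lattice is a lattice in which every family $(x_i)_{i\in I}$ of elements has a meet and a join; a homomorphism of $I$-complete lattices is a map preserving meets and joins of $I$-indexed families; $\mathbf{Lat}_I$ is the resulting category. Products are computed componentwise and subobjects are $I$-complete sublattices (subsets closed under $I$-indexed meets and joins). *)

theory Defs
  imports "HOL-Library.FuncSet"
begin

definition is_lub :: "('a \<Rightarrow> 'a \<Rightarrow> bool) \<Rightarrow> 'a set \<Rightarrow> 'a set \<Rightarrow> 'a \<Rightarrow> bool" where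
  "is_lub le A X u \<longleftrightarrow> u \<in> A \<and> (\<forall>x\<in>X. le x u) \<and> (\<forall>v\<in>A. (\<forall>x\<in>X. le x v) \<longrightarrow> le u v)"

definition is_glb :: "('a \<Rightarrow> 'a \<Rightarrow> bool) \<Rightarrow> 'a set \<Rightarrow> 'a set \<Rightarrow> 'a \<Rightarrow> bool" where
  "is_glb le A X u \<longleftrightarrow> u \<in> A \<and> (\<forall>x\<in>X. le u x) \<and> (\<forall>v\<in>A. (\<forall>x\<in>X. le v x) \<longrightarrow> le v u)"

definition poset_on :: "'a set \<Rightarrow> ('a \<Rightarrow> 'a \<Rightarrow> bool) \<Rightarrow> bool" where
  "poset_on A le \<longleftrightarrow> (\<forall>x\<in>A. le x x)
     \<and> (\<forall>x\<in>A. \<forall>y\<in>A. le x y \<and> le y x \<longrightarrow> x = y)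
     \<and> (\<forall>x\<in>A. \<forall>y\<in>A. \<forall>z\<in>A. le x y \<and> le y z \<longrightarrow> le x z)"

definition lattice_on :: "'a set \<Rightarrow> ('a \<Rightarrow> 'a \<Rightarrow> bool) \<Rightarrow> bool" where
  "lattice_on A le \<longleftrightarrow> poset_on A le
     \<and> (\<forall>x\<in>A. \<forall>y\<in>A. (\<exists>u. is_lub le A {x, y} u) \<and> (\<exists>u. is_glb le A {x, y} u))"

definition I_complete_lattice :: "'i set \<Rightarrow> 'a set \<Rightarrow> ('a \<Rightarrow> 'a \<Rightarrow> bool) \<Rightarrow> bool" where
  "I_complete_lattice I A le \<longleftrightarrow> lattice_on A le
     \<and> (\<forall>x. (\<forall>k\<in>I. x k \<in> A) \<longrightarrow> (\<exists>u. is_lub le A (x ` I) u) \<and> (\<exists>u. is_glb le A (x ` I) u))"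

definition prod_carrier :: "'i set \<Rightarrow> ('i \<Rightarrow> 'a set) \<Rightarrow> ('i \<Rightarrow> 'a) set" where
  "prod_carrier I C = PiE I C"

definition prod_le :: "'i set \<Rightarrow> ('i \<Rightarrow> 'a \<Rightarrow> 'a \<Rightarrow> bool) \<Rightarrow> ('i \<Rightarrow> 'a) \<Rightarrow> ('i \<Rightarrow> 'a) \<Rightarrow> bool" where
  "prod_le I le f g \<longleftrightarrow> (\<forall>i\<in>I. le i (f i) (g i))"

definition I_complete_sublattice :: "'i set \<Rightarrow> 'a set \<Rightarrow> ('a \<Rightarrow> 'a \<Rightarrow> bool) \<Rightarrow> 'a set \<Rightarrow> bool" where
  "I_complete_sublattice I A le S \<longleftrightarrow> S \<subseteq> A
     \<and> (\<forall>x. (\<forall>k\<in>I. x k \<in> S) \<longrightarrow>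
            (\<forall>u. is_lub le A (x ` I) u \<longrightarrow> u \<in> S) \<and> (\<forall>u. is_glb le A (x ` I) u \<longrightarrow> u \<in> S))"

definition proj2 :: "'i \<Rightarrow> 'i \<Rightarrow> ('i \<Rightarrow> 'a) set \<Rightarrow> ('a \<times> 'a) set" where
  "proj2 i j S = (\<lambda>s. (s i, s j)) ` S"

end

theory Submission
  imports Defs
begin

text \<open>Let \<open>t \<in> T\<close>. For every \<open>i, j \<in> I\<close> pick \<open>s\<^sub>i\<^sub>j \<in> S\<close> agreeing with \<open>t\<close> at \<open>i\<close> and \<open>j\<close>.
  The meet \<open>a\<^sub>i = \<Sqinter>\<^sub>j s\<^sub>i\<^sub>j\<close> lies in \<open>S\<close>, satisfies \<open>a\<^sub>i \<le> t\<close> (its \<open>j\<close>-th component is below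
  \<open>s\<^sub>i\<^sub>j j = t j\<close>) and \<open>a\<^sub>i i = t i\<close>. Hence \<open>t\<close> is the join \<open>\<Squnion>\<^sub>i a\<^sub>i\<close>, which lies in \<open>S\<close>.\<close>

lemma poset_on_is_glb_singleton:
  assumes "poset_on A le" "a \<in> A" "is_glb le A {a} u"
  shows "u = a"
  using assms unfolding poset_on_def is_glb_def by blast

lemma is_glb_prod_le:
  assumes "g \<in> prod_carrier I C"
    and "\<forall>k\<in>I. is_glb (le k) (C k) ((\<lambda>x. x k) ` X) (g k)"
  shows "is_glb (prod_le I le) (prod_carrier I C) X g"
  using assms unfolding is_glb_def prod_le_def prod_carrier_def by (auto simp: PiE_iff)

lemma prod_I_complete_lattice_glb:
  assumes L: "\<forall>k\<in>I. I_complete_lattice I (C k) (le k)"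
    and x: "\<forall>j\<in>I. x j \<in> prod_carrier I C"
  obtains g where "is_glb (prod_le I le) (prod_carrier I C) (x ` I) g"
    and "\<forall>k\<in>I. is_glb (le k) (C k) ((\<lambda>j. x j k) ` I) (g k)"
proof -
  have "\<exists>u. is_glb (le k) (C k) ((\<lambda>j. x j k) ` I) u" if "k \<in> I" for k
  proof -
    have "\<forall>j\<in>I. x j k \<in> C k" using x that unfolding prod_carrier_def by auto
    moreover have "I_complete_lattice I (C k) (le k)" using L that by blast
    ultimately show ?thesis
      unfolding I_complete_lattice_def by (blast dest: spec[of _ "\<lambda>j. x j k"])
  qed
  then obtain g where g: "\<forall>k\<in>I. is_glb (le k) (C k) ((\<lambda>j. x j k) ` I) (g k)"
    by metis
  have "restrict g I \<in> prod_carrier I C"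
    using g unfolding prod_carrier_def is_glb_def by auto
  moreover have "\<forall>k\<in>I. is_glb (le k) (C k) ((\<lambda>y. y k) ` (x ` I)) (restrict g I k)"
    using g by (simp add: image_image)
  ultimately have "is_glb (prod_le I le) (prod_carrier I C) (x ` I) (restrict g I)"
    by (rule is_glb_prod_le)
  then show ?thesis
    using that g by simp
qed

lemma is_lub_prod_le_diagonal:
  assumes "t \<in> prod_carrier I C"
    and "\<forall>i\<in>I. prod_le I le (a i) t" "\<forall>i\<in>I. a i i = t i"
  shows "is_lub (prod_le I le) (prod_carrier I C) (a ` I) t"
  using assms unfolding is_lub_def prod_le_def by fastforce

lemma I_complete_sublattice_glb_mem:
  assumes "I_complete_sublattice I A le S" "\<forall>k\<in>I. x k \<in> S" "is_glb le A (x ` I) u"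
  shows "u \<in> S"
  using assms unfolding I_complete_sublattice_def by blast

lemma I_complete_sublattice_lub_mem:
  assumes "I_complete_sublattice I A le S" "\<forall>k\<in>I. x k \<in> S" "is_lub le A (x ` I) u"
  shows "u \<in> S"
  using assms unfolding I_complete_sublattice_def by blast

lemma I_complete_sublattice_glb_agreeing_below:
  assumes L: "\<forall>k\<in>I. I_complete_lattice I (C k) (le k)"
    and S: "I_complete_sublattice I (prod_carrier I C) (prod_le I le) S"
    and t: "t \<in> prod_carrier I C" and i: "i \<in> I"
    and s: "\<forall>j\<in>I. s j \<in> S \<and> s j i = t i \<and> s j j = t j"
  obtains a where "a \<in> S" "a i = t i" "prod_le I le a t"
proof -
  have "\<forall>j\<in>I. s j \<in> prod_carrier I C"
    using S s unfolding I_complete_sublattice_def by blast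
  then obtain g where g: "is_glb (prod_le I le) (prod_carrier I C) (s ` I) g"
    and g_comp: "\<forall>k\<in>I. is_glb (le k) (C k) ((\<lambda>j. s j k) ` I) (g k)"
    using prod_I_complete_lattice_glb[OF L] by blast
  have "g \<in> S"
    using I_complete_sublattice_glb_mem[OF S _ g] s by blast
  moreover have "(\<lambda>j. s j i) ` I = {t i}"
    using s i by auto
  then have "is_glb (le i) (C i) {t i} (g i)"
    using g_comp i by metis
  moreover have "poset_on (C i) (le i)"
    using L i unfolding I_complete_lattice_def lattice_on_def by blast
  moreover have "t i \<in> C i"
    using t i unfolding prod_carrier_def by auto
  ultimately have "g i = t i"
    by (simp add: poset_on_is_glb_singleton)
  moreover have "le k (g k) (t k)" if "k \<in> I" for k
  proof -
    have "le k (g k) (s k k)"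
      using g_comp that unfolding is_glb_def by blast
    then show ?thesis using s that by simp
  qed
  ultimately show ?thesis
    using that \<open>g \<in> S\<close> unfolding prod_le_def by blast
qed

lemma I_complete_sublattice_subset_if_proj2_subset:
  assumes L: "\<forall>k\<in>I. I_complete_lattice I (C k) (le k)"
    and S: "I_complete_sublattice I (prod_carrier I C) (prod_le I le) S"
    and T: "I_complete_sublattice I (prod_carrier I C) (prod_le I le) T"
    and proj: "\<forall>i\<in>I. \<forall>j\<in>I. proj2 i j T \<subseteq> proj2 i j S"
  shows "T \<subseteq> S"
proof
  fix t assume "t \<in> T"
  then have t: "t \<in> prod_carrier I C"
    using T unfolding I_complete_sublattice_def by blast
  have "\<exists>s\<in>S. s i = t i \<and> s j = t j" if "i \<in> I" "j \<in> I" for i j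
  proof -
    have "(t i, t j) \<in> proj2 i j S"
      using proj that \<open>t \<in> T\<close> unfolding proj2_def by blast
    then show ?thesis unfolding proj2_def by auto
  qed
  then obtain s where s: "\<forall>i\<in>I. \<forall>j\<in>I. s i j \<in> S \<and> s i j i = t i \<and> s i j j = t j"
    by metis
  have "\<exists>a. a \<in> S \<and> a i = t i \<and> prod_le I le a t" if i: "i \<in> I" for i
  proof -
    have "\<forall>j\<in>I. s i j \<in> S \<and> s i j i = t i \<and> s i j j = t j"
      using s i by blast
    then obtain a where "a \<in> S" "a i = t i" "prod_le I le a t"
      by (rule I_complete_sublattice_glb_agreeing_below[OF L S t i])
    then show ?thesis by blast
  qed
  then obtain a where a: "\<forall>i\<in>I. a i \<in> S \<and> a i i = t i \<and> prod_le I le (a i) t"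
    by metis
  then have "is_lub (prod_le I le) (prod_carrier I C) (a ` I) t"
    using t by (simp add: is_lub_prod_le_diagonal)
  then show "t \<in> S"
    using I_complete_sublattice_lub_mem[OF S] a by blast
qed

theorem proposition4p10:
  fixes I :: "'i set" and C :: "'i \<Rightarrow> 'a set" and le :: "'i \<Rightarrow> 'a \<Rightarrow> 'a \<Rightarrow> bool"
    and S T :: "('i \<Rightarrow> 'a) set"
  assumes "I \<noteq> {}"
    and "\<forall>i\<in>I. I_complete_lattice I (C i) (le i)"
    and "I_complete_sublattice I (prod_carrier I C) (prod_le I le) S"
    and "I_complete_sublattice I (prod_carrier I C) (prod_le I le) T"
    and "\<forall>i\<in>I. \<forall>j\<in>I. proj2 i j S = proj2 i j T"
  shows "S = T"
proof
  show "S \<subseteq> T"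
    using I_complete_sublattice_subset_if_proj2_subset[OF assms(2,4,3)] assms(5) by simp
  show "T \<subseteq> S"
    using I_complete_sublattice_subset_if_proj2_subset[OF assms(2,3,4)] assms(5) by simp
qed

end
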